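(* Let $k\subset K$ be a finite totally ramified Galois extension of complete discrete valuation fields with Galois group $G$ and degree $n$, and let $B\subset K[G]\setminus\{0\}$ be a finite graded-independent set. 1. Let $c:B\to k$ be a function which is not identically zero, and let $m=\min\{v(c_b)+d(b):\ b\in B,\ c_b\ne0\}$. Then $d(\sum_{b\in B}c_bb)=m$, and $\mathfrak p(\sum_{b\in B}c_bb)=\sum_{b}\lambda_b\,\mathfrak p(b)$, the sum over those $b\in B$ with $c_b\neq 0$ and $v(c_b)+d(b)=m$, for some nonzero $\lambda_b\in\bar k$. 2. For every $i\in\mathbb Z$, $\mathfrak C_i\cap\big(\bigoplus_{b\in B}k\cdot b\big)=\bigoplus_{b\in B}\pi_k^{\lfloor(i-d-d(b)-1)/n\rfloor+1}O_k\cdot b$. Moreover, if $B$ has exactly $n$ elements and $B\subset k[G]$, then $B$ is a graded base for $K/k$.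
   Context: $O_k$, $O_K$ are the rings of integers, $\pi_k$ a uniformizer of $k$, $\pi$ a uniformizer of $K$, $\bar k$ the residue field, $r:O_K\to\bar k$ reduction, $v$ the valuation of $K$ with $v(K^* )=\mathbb Z$, $d=v(\mathfrak D_{K/k})-n+1$ the ramification depth ($\mathfrak D_{K/k}$ the different), $c_\pi=\mathrm{Tr}_{K/k}(\pi^{-d})\in O_k^*$, $R=\bar k[X]/(X^n-1)$. $f=\sum a_\sigma\sigma\in K[G]$ acts on $K$ by $f(x)=\sum a_\sigma\sigma(x)$. $\mathfrak C_i=\{f\in K[G]: v(f(x))-v(x)\ge i\ \forall x\in K^*\}$. For $f\in\mathfrak C_i$, $p_i(f)=r(c_\pi)^{-1}\sum_{j=0}^{n-1}r(f(\pi^{j-i})/\pi^j)X^j\in R$. For $f\ne0$: $d(f)=i$ iff $f\in\mathfrak C_{i+d}\setminus\mathfrak C_{i+d+1}$, and $\mathfrak p(f)=p_{d(f)+d}(f)$. For $B\subset K[G]\setminus\{0\}$ and $s\in\mathbb Z$, $B_s=\{f\in B: d(f)\equiv s\bmod n\}$; $B$ is graded-independent if for every $s$ the family $(\mathfrak p(b))_{b\in B_s}$ is $\bar k$-linearly independent in $R$; $B$ is a graded base for $K/k$ if $B\subset k[G]$ is graded-independent and generates $k[G]$ as a $k$-vector space. *)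

theory Defs
  imports "HOL-Computational_Algebra.Polynomial"
begin

text \<open>The valuation v of K is a function on the whole field type; its value at 0 is
irrelevant (morally v 0 = infinity), so we use the predicate vge v x m, meaning v(x) is at least m.\<close>

definition vge :: "('K::field \<Rightarrow> int) \<Rightarrow> 'K \<Rightarrow> int \<Rightarrow> bool" where
  "vge v x m \<longleftrightarrow> x = 0 \<or> m \<le> v x"

definition OK :: "('K::field \<Rightarrow> int) \<Rightarrow> 'K set" where
  "OK v = {x. vge v x 0}"

definition is_dvf :: "('K::field \<Rightarrow> int) \<Rightarrow> bool" where
  "is_dvf v \<longleftrightarrow>
     (\<forall>x y. x \<noteq> 0 \<longrightarrow> y \<noteq> 0 \<longrightarrow> v (x * y) = v x + v y) \<and>
     (\<forall>x y. x \<noteq> 0 \<longrightarrow> y \<noteq> 0 \<longrightarrow> x + y \<noteq> 0 \<longrightarrow> min (v x) (v y) \<le> v (x + y)) \<and>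
     v ` (UNIV - {0}) = UNIV"

definition complete_wrt :: "('K::field \<Rightarrow> int) \<Rightarrow> 'K set \<Rightarrow> bool" where
  "complete_wrt v S \<longleftrightarrow>
     (\<forall>X::nat \<Rightarrow> 'K. (\<forall>j. X j \<in> S) \<and> (\<forall>M. \<exists>N. \<forall>a\<ge>N. \<forall>b\<ge>N. vge v (X a - X b) M)
          \<longrightarrow> (\<exists>L\<in>S. \<forall>M. \<exists>N. \<forall>a\<ge>N. vge v (X a - L) M))"

definition subfield :: "'K::field set \<Rightarrow> bool" where
  "subfield k \<longleftrightarrow> 0 \<in> k \<and> 1 \<in> k \<and>
     (\<forall>x\<in>k. \<forall>y\<in>k. x + y \<in> k \<and> x - y \<in> k \<and> x * y \<in> k) \<and>
     (\<forall>x\<in>k. inverse x \<in> k)"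

definition field_aut :: "('K::field \<Rightarrow> 'K) \<Rightarrow> bool" where
  "field_aut \<sigma> \<longleftrightarrow> bij \<sigma> \<and> \<sigma> 1 = 1 \<and>
     (\<forall>x y. \<sigma> (x + y) = \<sigma> x + \<sigma> y \<and> \<sigma> (x * y) = \<sigma> x * \<sigma> y)"

definition finite_galois :: "'K::field set \<Rightarrow> ('K \<Rightarrow> 'K) set \<Rightarrow> bool" where
  "finite_galois k G \<longleftrightarrow>
     G = {\<sigma>. field_aut \<sigma> \<and> (\<forall>x\<in>k. \<sigma> x = x)} \<and> finite G \<and>
     {x. \<forall>\<sigma>\<in>G. \<sigma> x = x} = k"

text \<open>The standing hyp: k inside K (K is the whole type), complete discrete valuation
fields, K/k finite Galois with group G of order n = card G, totally ramified
(ramification index [v(K*):v(k*)] = n), uniformizers pi of K and pik of k, and the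
reduction map r from O_K onto the residue field (a field type 'r), a ring
homomorphism O_K -> 'r, surjective, with kernel the maximal ideal.\<close>
definition tr_context ::
  "('K::field \<Rightarrow> int) \<Rightarrow> 'K set \<Rightarrow> ('K \<Rightarrow> 'K) set \<Rightarrow> 'K \<Rightarrow> 'K \<Rightarrow> ('K \<Rightarrow> 'r::field) \<Rightarrow> bool" where
  "tr_context v k G \<pi> \<pi>k r \<longleftrightarrow>
     is_dvf v \<and> complete_wrt v UNIV \<and> subfield k \<and> complete_wrt v k \<and>
     finite_galois k G \<and>
     v ` (k - {0}) = range (\<lambda>z. int (card G) * z) \<and>
     \<pi> \<noteq> 0 \<and> v \<pi> = 1 \<and> \<pi>k \<in> k \<and> \<pi>k \<noteq> 0 \<and> v \<pi>k = int (card G) \<and>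
     (\<forall>x\<in>OK v. \<forall>y\<in>OK v. r (x + y) = r x + r y \<and> r (x * y) = r x * r y) \<and>
     r 1 = 1 \<and> r ` OK v = UNIV \<and> (\<forall>x\<in>OK v. r x = 0 \<longleftrightarrow> vge v x 1)"

definition tr :: "('K::field \<Rightarrow> 'K) set \<Rightarrow> 'K \<Rightarrow> 'K" where
  "tr G x = (\<Sum>\<sigma>\<in>G. \<sigma> x)"

definition codiff :: "('K::field \<Rightarrow> int) \<Rightarrow> 'K set \<Rightarrow> ('K \<Rightarrow> 'K) set \<Rightarrow> 'K set" where
  "codiff v k G = {x. \<forall>y\<in>OK v. tr G (x * y) \<in> k \<inter> OK v}"

definition diffval :: "('K::field \<Rightarrow> int) \<Rightarrow> 'K set \<Rightarrow> ('K \<Rightarrow> 'K) set \<Rightarrow> int" where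
  "diffval v k G = (THE \<delta>. codiff v k G = {x. vge v x (- \<delta>)})"

definition depth :: "('K::field \<Rightarrow> int) \<Rightarrow> 'K set \<Rightarrow> ('K \<Rightarrow> 'K) set \<Rightarrow> int" where
  "depth v k G = diffval v k G - int (card G) + 1"

text \<open>Elements of K[G] are coefficient functions G -> K (zero outside G).\<close>
definition KG :: "('K::field \<Rightarrow> 'K) set \<Rightarrow> (('K \<Rightarrow> 'K) \<Rightarrow> 'K) set" where
  "KG G = {f. \<forall>\<sigma>. \<sigma> \<notin> G \<longrightarrow> f \<sigma> = 0}"

definition kG :: "'K::field set \<Rightarrow> ('K \<Rightarrow> 'K) set \<Rightarrow> (('K \<Rightarrow> 'K) \<Rightarrow> 'K) set" where
  "kG k G = {f \<in> KG G. \<forall>\<sigma>. f \<sigma> \<in> k}"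

definition act :: "('K::field \<Rightarrow> 'K) set \<Rightarrow> (('K \<Rightarrow> 'K) \<Rightarrow> 'K) \<Rightarrow> 'K \<Rightarrow> 'K" where
  "act G f x = (\<Sum>\<sigma>\<in>G. f \<sigma> * \<sigma> x)"

definition lincomb :: "(('K \<Rightarrow> 'K) \<Rightarrow> 'K) set \<Rightarrow> ((('K \<Rightarrow> 'K) \<Rightarrow> 'K) \<Rightarrow> 'K::field)
     \<Rightarrow> (('K \<Rightarrow> 'K) \<Rightarrow> 'K)" where
  "lincomb S c = (\<lambda>\<sigma>. \<Sum>b\<in>S. c b * b \<sigma>)"

definition kspan :: "'K::field set \<Rightarrow> (('K \<Rightarrow> 'K) \<Rightarrow> 'K) set \<Rightarrow> (('K \<Rightarrow> 'K) \<Rightarrow> 'K) set" where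
  "kspan k B = {lincomb S c | S c. finite S \<and> S \<subseteq> B \<and> (\<forall>b\<in>S. c b \<in> k)}"

definition CC :: "('K::field \<Rightarrow> int) \<Rightarrow> ('K \<Rightarrow> 'K) set \<Rightarrow> int \<Rightarrow> (('K \<Rightarrow> 'K) \<Rightarrow> 'K) set" where
  "CC v G i = {f \<in> KG G. \<forall>x. x \<noteq> 0 \<longrightarrow> vge v (act G f x) (v x + i)}"

definition cpi :: "('K::field \<Rightarrow> int) \<Rightarrow> 'K set \<Rightarrow> ('K \<Rightarrow> 'K) set \<Rightarrow> 'K \<Rightarrow> 'K" where
  "cpi v k G \<pi> = tr G (\<pi> powi (- depth v k G))"

text \<open>p_i(f) in R = kbar[X]/(X^n - 1), given by its representative of degree < n.\<close>
definition pp :: "('K::field \<Rightarrow> int) \<Rightarrow> 'K set \<Rightarrow> ('K \<Rightarrow> 'K) set \<Rightarrow> 'K \<Rightarrow> ('K \<Rightarrow> 'r::field)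
     \<Rightarrow> int \<Rightarrow> (('K \<Rightarrow> 'K) \<Rightarrow> 'K) \<Rightarrow> 'r poly" where
  "pp v k G \<pi> r i f = smult (inverse (r (cpi v k G \<pi>)))
     (\<Sum>j<card G. monom (r (act G f (\<pi> powi (int j - i)) / \<pi> ^ j)) j)"

definition dfun :: "('K::field \<Rightarrow> int) \<Rightarrow> 'K set \<Rightarrow> ('K \<Rightarrow> 'K) set
     \<Rightarrow> (('K \<Rightarrow> 'K) \<Rightarrow> 'K) \<Rightarrow> int" where
  "dfun v k G f = (THE i. f \<in> CC v G (i + depth v k G) \<and> f \<notin> CC v G (i + depth v k G + 1))"

definition frakp :: "('K::field \<Rightarrow> int) \<Rightarrow> 'K set \<Rightarrow> ('K \<Rightarrow> 'K) set \<Rightarrow> 'K \<Rightarrow> ('K \<Rightarrow> 'r::field)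
     \<Rightarrow> (('K \<Rightarrow> 'K) \<Rightarrow> 'K) \<Rightarrow> 'r poly" where
  "frakp v k G \<pi> r f = pp v k G \<pi> r (dfun v k G f + depth v k G) f"

definition R_eq :: "nat \<Rightarrow> 'r::field poly \<Rightarrow> 'r poly \<Rightarrow> bool" where
  "R_eq n p q \<longleftrightarrow> (monom 1 n - 1) dvd (p - q)"

definition Bs :: "('K::field \<Rightarrow> int) \<Rightarrow> 'K set \<Rightarrow> ('K \<Rightarrow> 'K) set
     \<Rightarrow> (('K \<Rightarrow> 'K) \<Rightarrow> 'K) set \<Rightarrow> int \<Rightarrow> (('K \<Rightarrow> 'K) \<Rightarrow> 'K) set" where
  "Bs v k G B s = {b \<in> B. dfun v k G b mod int (card G) = s mod int (card G)}"

definition graded_indep :: "('K::field \<Rightarrow> int) \<Rightarrow> 'K set \<Rightarrow> ('K \<Rightarrow> 'K) set \<Rightarrow> 'K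
     \<Rightarrow> ('K \<Rightarrow> 'r::field) \<Rightarrow> (('K \<Rightarrow> 'K) \<Rightarrow> 'K) set \<Rightarrow> bool" where
  "graded_indep v k G \<pi> r B \<longleftrightarrow>
     (\<forall>s::int. \<forall>S lam. finite S \<and> S \<subseteq> Bs v k G B s \<and>
        R_eq (card G) (\<Sum>b\<in>S. smult (lam b) (frakp v k G \<pi> r b)) 0
        \<longrightarrow> (\<forall>b\<in>S. lam b = 0))"

definition graded_base :: "('K::field \<Rightarrow> int) \<Rightarrow> 'K set \<Rightarrow> ('K \<Rightarrow> 'K) set \<Rightarrow> 'K
     \<Rightarrow> ('K \<Rightarrow> 'r::field) \<Rightarrow> (('K \<Rightarrow> 'K) \<Rightarrow> 'K) set \<Rightarrow> bool" where
  "graded_base v k G \<pi> r B \<longleftrightarrow>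
     B \<subseteq> kG k G \<and> graded_indep v k G \<pi> r B \<and> kspan k B = kG k G"

end

theory Submission
  imports Defs
begin

text \<open>
  Since K/k is totally ramified of degree n, the valuations of the elements c \<pi>^j with
  c \<in> k^* and j < n lie in distinct classes modulo n, so by Artin's bound [K:k] \<le> |G| the
  powers \<pi>^j form a k-basis of K. Consequently G preserves v, and every integral element of K
  is congruent modulo \<pi> to an element of k. Hence for c \<in> k^* and f \<in> C_i the product c f lies
  in C_(i + v c), and p_(i + v c)(c f) is p_i(f) times the nonzero residue of the unit
  c \<pi>^(-v c); moreover p_i is additive on C_i and vanishes on C_(i+1).

  For F = \<Sum> c_b b let m be the minimum of v(c_b) + d(b). All terms lie in C_(m+d), the
  non-minimal ones even in C_(m+d+1), and the minimal ones have d(b) \<equiv> m modulo n because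
  v(c_b) \<in> nZ. So p_(m+d)(F) is a combination of these p(b) with nonzero coefficients, which
  graded independence forbids to vanish: F \<notin> C_(m+d+1), whence d(F) = m and the formula for
  p(F). Part 2 follows by comparing v(c_b) with i - d - d(b), and part 3 because by part 1 the
  n elements of B are k-linearly independent in the n-dimensional space k[G].
\<close>

lemma ceiling_div_le_iff:
  fixes n d t :: int
  assumes "0 < n"
  shows "(d - 1) div n + 1 \<le> t \<longleftrightarrow> d \<le> n * t"
proof -
  have "n * ((d - 1) div n) + (d - 1) mod n = d - 1" by (rule mult_div_mod_eq)
  moreover have "0 \<le> (d - 1) mod n" "(d - 1) mod n < n" using assms by simp_all
  ultimately have "n * ((d - 1) div n) < d" "d \<le> n * ((d - 1) div n + 1)"
    by (linarith, simp add: distrib_left, linarith)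
  then show ?thesis
    using assms by (smt (verit) mult_le_cancel_left_pos mult_less_cancel_left_pos)
qed

lemma smult_sum_right: "smult c (\<Sum>i\<in>S. p i) = (\<Sum>i\<in>S. smult c (p i))"
  by (induction S rule: infinite_finite_induct) (simp_all add: smult_add_right)

section \<open>Linear algebra over a subfield\<close>

lemma
  assumes "subfield F"
  shows subfield_zero: "0 \<in> F" and subfield_one: "1 \<in> F"
    and subfield_add: "x \<in> F \<Longrightarrow> y \<in> F \<Longrightarrow> x + y \<in> F"
    and subfield_diff: "x \<in> F \<Longrightarrow> y \<in> F \<Longrightarrow> x - y \<in> F"
    and subfield_mult: "x \<in> F \<Longrightarrow> y \<in> F \<Longrightarrow> x * y \<in> F"
    and subfield_inverse: "x \<in> F \<Longrightarrow> inverse x \<in> F"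
  using assms unfolding subfield_def by auto

lemma subfield_uminus: "subfield F \<Longrightarrow> x \<in> F \<Longrightarrow> - x \<in> F"
  using subfield_diff[of F 0 x] by (simp add: subfield_zero)

lemma subfield_divide: "subfield F \<Longrightarrow> x \<in> F \<Longrightarrow> y \<in> F \<Longrightarrow> x / y \<in> F"
  by (simp add: divide_inverse subfield_mult subfield_inverse)

lemma subfield_sum: "subfield F \<Longrightarrow> (\<And>i. i \<in> S \<Longrightarrow> f i \<in> F) \<Longrightarrow> sum f S \<in> F"
  by (induction S rule: infinite_finite_induct) (auto intro: subfield_zero subfield_add)

lemma subfield_power: "subfield F \<Longrightarrow> x \<in> F \<Longrightarrow> x ^ m \<in> F"
  by (induction m) (auto intro: subfield_one subfield_mult)

lemma subfield_power_int: "subfield F \<Longrightarrow> x \<in> F \<Longrightarrow> x powi m \<in> F"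
  by (cases "m \<ge> 0") (auto simp: power_int_def subfield_power subfield_inverse)

lemma subfield_UNIV: "subfield (UNIV :: 'a::field set)"
  by (simp add: subfield_def)

lemma underdetermined_system_nontrivial_solution:
  fixes a :: "'e \<Rightarrow> 'j \<Rightarrow> 'a::field"
  assumes F: "subfield F" and "finite E" "finite J" "card E < card J"
    and "\<forall>e\<in>E. \<forall>j\<in>J. a e j \<in> F"
  shows "\<exists>y. (\<forall>j\<in>J. y j \<in> F) \<and> (\<exists>j\<in>J. y j \<noteq> 0) \<and> (\<forall>e\<in>E. (\<Sum>j\<in>J. a e j * y j) = 0)"
  using assms(2-)
proof (induction E arbitrary: J a rule: finite_induct)
  case empty
  then obtain j0 where "j0 \<in> J" by fastforce
  then show ?case
    by (intro exI[of _ "\<lambda>j. if j = j0 then 1 else 0"])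
      (auto simp: subfield_zero[OF F] subfield_one[OF F])
next
  case (insert e E)
  show ?case
  proof (cases "\<forall>j\<in>J. a e j = 0")
    case True
    have "card E < card J" using insert by simp
    then show ?thesis using True insert.IH[of J a] insert.prems by auto
  next
    case False
    then obtain j0 where j0: "j0 \<in> J" "a e j0 \<noteq> 0" by auto
    define J' where "J' = J - {j0}"
    \<comment> \<open>Gaussian elimination of the unknown at j0 by means of equation e\<close>
    define a' where "a' = (\<lambda>e' j. a e' j - a e' j0 / a e j0 * a e j)"
    have "finite J'" "card E < card J'"
      using insert.prems insert.hyps j0 unfolding J'_def by (simp_all add: card_Diff_singleton)
    moreover have "\<forall>e'\<in>E. \<forall>j\<in>J'. a' e' j \<in> F" using insert.prems j0 unfolding a'_def J'_def
      by (auto intro!: subfield_diff[OF F] subfield_mult[OF F] subfield_divide[OF F])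
    ultimately obtain y' where y': "\<forall>j\<in>J'. y' j \<in> F" "\<exists>j\<in>J'. y' j \<noteq> 0"
        "\<forall>e'\<in>E. (\<Sum>j\<in>J'. a' e' j * y' j) = 0"
      using insert.IH by blast
    define S where "S = (\<Sum>j\<in>J'. a e j * y' j)"
    define y where "y = (\<lambda>j. if j = j0 then - S / a e j0 else y' j)"
    have split: "(\<Sum>j\<in>J. a e' j * y j) = a e' j0 * y j0 + (\<Sum>j\<in>J'. a e' j * y' j)" for e'
      using insert.prems(1) j0 unfolding J'_def y_def by (simp add: sum.remove)
    have "S \<in> F" unfolding S_def using insert.prems y'(1) unfolding J'_def
      by (intro subfield_sum[OF F]) (auto intro!: subfield_mult[OF F])
    then have "\<forall>j\<in>J. y j \<in> F" using y'(1) insert.prems j0 unfolding y_def J'_def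
      by (auto intro!: subfield_divide[OF F] subfield_uminus[OF F])
    moreover have "\<exists>j\<in>J. y j \<noteq> 0" using y'(2) unfolding y_def J'_def by auto
    moreover have "(\<Sum>j\<in>J. a e j * y j) = 0"
    proof -
      have "y j0 = - S / a e j0" by (simp add: y_def)
      then show ?thesis using j0 by (simp add: split S_def[symmetric])
    qed
    moreover have "(\<Sum>j\<in>J. a e' j * y j) = 0" if "e' \<in> E" for e'
    proof -
      have "0 = (\<Sum>j\<in>J'. a' e' j * y' j)" using y'(3) that by simp
      also have "\<dots> = (\<Sum>j\<in>J'. a e' j * y' j) - a e' j0 / a e j0 * S"
        unfolding a'_def S_def by (simp add: algebra_simps sum_subtractf sum_distrib_left)
      finally have "(\<Sum>j\<in>J'. a e' j * y' j) = a e' j0 / a e j0 * S" by simp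
      moreover have "y j0 = - S / a e j0" by (simp add: y_def)
      ultimately show ?thesis unfolding split by simp
    qed
    ultimately show ?thesis by auto
  qed
qed

section \<open>Discrete valuations\<close>

lemma vge_zero [simp]: "vge v 0 m"
  by (simp add: vge_def)

lemma vge_val: "vge v x (v x)"
  by (simp add: vge_def)

lemma vge_iff: "x \<noteq> 0 \<Longrightarrow> vge v x m \<longleftrightarrow> m \<le> v x"
  by (simp add: vge_def)

lemma vge_mono: "vge v x a \<Longrightarrow> b \<le> a \<Longrightarrow> vge v x b"
  by (auto simp: vge_def)

context
  fixes v :: "'K::field \<Rightarrow> int"
  assumes dvf: "is_dvf v"
begin

lemma val_mult: "x \<noteq> 0 \<Longrightarrow> y \<noteq> 0 \<Longrightarrow> v (x * y) = v x + v y"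
  using dvf unfolding is_dvf_def by blast

lemma val_add: "x \<noteq> 0 \<Longrightarrow> y \<noteq> 0 \<Longrightarrow> x + y \<noteq> 0 \<Longrightarrow> min (v x) (v y) \<le> v (x + y)"
  using dvf unfolding is_dvf_def by blast

lemma val_one: "v 1 = 0"
  using val_mult[of 1 1] by simp

lemma val_inverse: "x \<noteq> 0 \<Longrightarrow> v (inverse x) = - v x"
  using val_mult[of x "inverse x"] val_one by simp

lemma val_uminus: "v (- x) = v x"
proof (cases "x = 0")
  case False
  have "v (-1) = 0" using val_mult[of "-1" "-1"] val_one by simp
  then show ?thesis using val_mult[of "-1" x] False by simp
qed simp

lemma val_divide: "x \<noteq> 0 \<Longrightarrow> y \<noteq> 0 \<Longrightarrow> v (x / y) = v x - v y"
  by (simp add: divide_inverse val_mult val_inverse)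

lemma val_power: "x \<noteq> 0 \<Longrightarrow> v (x ^ m) = int m * v x"
  by (induction m) (auto simp: val_one val_mult algebra_simps)

lemma val_power_int: "x \<noteq> 0 \<Longrightarrow> v (x powi m) = m * v x"
  by (cases "m \<ge> 0") (auto simp: power_int_def val_power val_inverse)

lemma vge_add: "vge v x m \<Longrightarrow> vge v y m \<Longrightarrow> vge v (x + y) m"
  unfolding vge_def using val_add[of x y] by fastforce

lemma vge_mult: "vge v x a \<Longrightarrow> vge v y b \<Longrightarrow> vge v (x * y) (a + b)"
  by (cases "x = 0"; cases "y = 0") (auto simp: vge_def val_mult)

lemma vge_sum: "(\<And>i. i \<in> S \<Longrightarrow> vge v (f i) m) \<Longrightarrow> vge v (sum f S) m"
  by (induction S rule: infinite_finite_induct) (auto intro: vge_add)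

lemma vge_divide_iff: "c \<noteq> 0 \<Longrightarrow> vge v (x / c) m \<longleftrightarrow> vge v x (m + v c)"
  by (cases "x = 0") (auto simp: vge_def val_divide)

lemma zero_if_vge_all: "(\<And>m. vge v x m) \<Longrightarrow> x = 0"
  using vge_iff[of x v "v x + 1"] by fastforce

lemma val_add_eq_if_vge:
  assumes "x \<noteq> 0" "vge v y (v x + 1)"
  shows "x + y \<noteq> 0 \<and> v (x + y) = v x"
proof (cases "y = 0")
  case False
  then have less: "v x < v y" using assms by (simp add: vge_def)
  have nz: "x + y \<noteq> 0"
  proof
    assume "x + y = 0"
    then have "y = - x" by (simp add: eq_neg_iff_add_eq_0 add.commute)
    then show False using less val_uminus by simp
  qed
  have "v x \<le> v (x + y)" using val_add[OF assms(1) False nz] less by simp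
  moreover have "min (v (x + y)) (v (- y)) \<le> v x"
    using val_add[OF nz, of "- y"] False assms(1) by simp
  ultimately show ?thesis using nz less val_uminus[of y] by linarith
qed (use assms in simp)

lemma vge_summand_if_distinct_vals:
  assumes fin: "finite S"
    and distinct: "\<And>i j. i \<in> S \<Longrightarrow> j \<in> S \<Longrightarrow> i \<noteq> j \<Longrightarrow> z i \<noteq> 0 \<Longrightarrow> z j \<noteq> 0 \<Longrightarrow> v (z i) \<noteq> v (z j)"
    and sum: "vge v (sum z S) M"
    and j: "j \<in> S"
  shows "vge v (z j) M"
proof (rule ccontr)
  assume not_j: "\<not> vge v (z j) M"
  let ?N = "{i \<in> S. z i \<noteq> 0}"
  have jN: "j \<in> ?N" using not_j j by auto
  have "Min ((\<lambda>i. v (z i)) ` ?N) \<in> (\<lambda>i. v (z i)) ` ?N"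
    using fin jN by (intro Min_in) auto
  then obtain i0 where i0: "i0 \<in> ?N" and "v (z i0) = Min ((\<lambda>i. v (z i)) ` ?N)" by auto
  then have min: "\<And>i. i \<in> ?N \<Longrightarrow> v (z i0) \<le> v (z i)" using fin by simp
  have "vge v (sum z (S - {i0})) (v (z i0) + 1)"
  proof (rule vge_sum)
    fix i assume i: "i \<in> S - {i0}"
    show "vge v (z i) (v (z i0) + 1)"
      using distinct[of i i0] min[of i] i i0 by (cases "z i = 0") (auto simp: vge_def)
  qed
  moreover have "sum z S = z i0 + sum z (S - {i0})"
    using fin i0 by (simp add: sum.remove)
  ultimately have "sum z S \<noteq> 0" "v (sum z S) = v (z i0)"
    using val_add_eq_if_vge i0 by auto
  then show False using sum min[OF jN] not_j jN by (auto simp: vge_def)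
qed

end

section \<open>Field automorphisms\<close>

context
  fixes \<sigma> :: "'a::field \<Rightarrow> 'a"
  assumes aut: "field_aut \<sigma>"
begin

lemma field_aut_add: "\<sigma> (x + y) = \<sigma> x + \<sigma> y"
  and field_aut_mult: "\<sigma> (x * y) = \<sigma> x * \<sigma> y"
  and field_aut_one: "\<sigma> 1 = 1"
  and field_aut_bij: "bij \<sigma>"
  using aut unfolding field_aut_def by auto

lemma field_aut_zero: "\<sigma> 0 = 0"
  using field_aut_add[of 0 0] by (metis add.right_neutral add_left_cancel)

lemma field_aut_sum: "\<sigma> (sum f S) = (\<Sum>i\<in>S. \<sigma> (f i))"
  by (induction S rule: infinite_finite_induct) (auto simp: field_aut_zero field_aut_add)

lemma field_aut_power: "\<sigma> (x ^ m) = \<sigma> x ^ m"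
  by (induction m) (auto simp: field_aut_one field_aut_mult)

lemma field_aut_nonzero: "x \<noteq> 0 \<Longrightarrow> \<sigma> x \<noteq> 0"
  using bij_is_inj[OF field_aut_bij] field_aut_zero by (metis injD)

lemma field_aut_inv: "field_aut (inv \<sigma>)"
proof -
  have \<sigma>_inv: "\<sigma> (inv \<sigma> x) = x" and inv_\<sigma>: "inv \<sigma> (\<sigma> x) = x" for x
    using field_aut_bij by (simp_all add: bij_is_surj surj_f_inv_f bij_is_inj)
  show ?thesis unfolding field_aut_def
  proof (intro conjI allI)
    show "bij (inv \<sigma>)" using field_aut_bij by (rule bij_imp_bij_inv)
    show "inv \<sigma> 1 = 1" using inv_\<sigma>[of 1] field_aut_one by simp
    fix x y
    show "inv \<sigma> (x + y) = inv \<sigma> x + inv \<sigma> y"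
      using field_aut_add[of "inv \<sigma> x" "inv \<sigma> y"] \<sigma>_inv inv_\<sigma> by metis
    show "inv \<sigma> (x * y) = inv \<sigma> x * inv \<sigma> y"
      using field_aut_mult[of "inv \<sigma> x" "inv \<sigma> y"] \<sigma>_inv inv_\<sigma> by metis
  qed
qed

end

lemma field_aut_comp: "field_aut \<sigma> \<Longrightarrow> field_aut \<tau> \<Longrightarrow> field_aut (\<sigma> \<circ> \<tau>)"
  unfolding field_aut_def by (auto intro: bij_comp)

section \<open>Totally ramified Galois extensions\<close>

locale totally_ramified =
  fixes v :: "'K::field \<Rightarrow> int" and k :: "'K set" and G :: "('K \<Rightarrow> 'K) set"
    and \<pi> \<pi>k :: 'K and r :: "'K \<Rightarrow> 'r::field"
  assumes tr_context: "tr_context v k G \<pi> \<pi>k r"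
begin

lemma is_dvf_v: "is_dvf v"
  and subfield_k: "subfield k"
  and finite_galois_k_G: "finite_galois k G"
  and val_k: "v ` (k - {0}) = range (\<lambda>z. int (card G) * z)"
  and pi_nonzero: "\<pi> \<noteq> 0" and val_pi: "v \<pi> = 1"
  and pik_in_k: "\<pi>k \<in> k" and pik_nonzero: "\<pi>k \<noteq> 0" and val_pik: "v \<pi>k = int (card G)"
  and r_add: "x \<in> OK v \<Longrightarrow> y \<in> OK v \<Longrightarrow> r (x + y) = r x + r y"
  and r_mult: "x \<in> OK v \<Longrightarrow> y \<in> OK v \<Longrightarrow> r (x * y) = r x * r y"
  and r_eq_0_iff: "x \<in> OK v \<Longrightarrow> r x = 0 \<longleftrightarrow> vge v x 1"
  using tr_context unfolding tr_context_def by auto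

lemma val_k_multiple:
  assumes "c \<in> k" "c \<noteq> 0"
  shows "\<exists>t. v c = int (card G) * t"
proof -
  have "v c \<in> v ` (k - {0})" using assms by simp
  then show ?thesis unfolding val_k by auto
qed

lemma finite_G: "finite G"
  and mem_G_iff: "\<sigma> \<in> G \<longleftrightarrow> field_aut \<sigma> \<and> (\<forall>x\<in>k. \<sigma> x = x)"
  and in_k_if_fixed: "(\<And>\<sigma>. \<sigma> \<in> G \<Longrightarrow> \<sigma> x = x) \<Longrightarrow> x \<in> k"
  using finite_galois_k_G unfolding finite_galois_def by blast+

lemma G_field_aut: "\<sigma> \<in> G \<Longrightarrow> field_aut \<sigma>"
  and G_fixes_k: "\<sigma> \<in> G \<Longrightarrow> x \<in> k \<Longrightarrow> \<sigma> x = x"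
  using mem_G_iff by blast+

lemma id_in_G: "id \<in> G"
  using mem_G_iff by (simp add: field_aut_def)

lemma card_G_pos: "card G > 0"
  using finite_G id_in_G card_gt_0_iff by blast

lemma G_comp: "\<sigma> \<in> G \<Longrightarrow> \<tau> \<in> G \<Longrightarrow> \<sigma> \<circ> \<tau> \<in> G"
  using mem_G_iff field_aut_comp by fastforce

lemma G_inv_cancel: "\<sigma> \<in> G \<Longrightarrow> \<sigma> (inv \<sigma> x) = x" "\<sigma> \<in> G \<Longrightarrow> inv \<sigma> (\<sigma> x) = x"
  using field_aut_bij[OF G_field_aut] by (simp_all add: bij_is_surj surj_f_inv_f bij_is_inj)

lemma G_inv:
  assumes "\<sigma> \<in> G"
  shows "inv \<sigma> \<in> G"
proof -
  have "inv \<sigma> x = x" if "x \<in> k" for x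
    using G_fixes_k[OF assms that] G_inv_cancel(2)[OF assms, of x] by simp
  then show ?thesis using mem_G_iff field_aut_inv[OF G_field_aut[OF assms]] by blast
qed

lemma val_power_int_pi: "v (\<pi> powi m) = m"
  using val_power_int[OF is_dvf_v pi_nonzero] val_pi by simp

lemma val_power_pi: "v (\<pi> ^ j) = int j"
  using val_power[OF is_dvf_v pi_nonzero] val_pi by simp

lemma r_zero: "r 0 = 0"
  using r_eq_0_iff[of 0] by (simp add: OK_def vge_def)

lemma r_eq_0_if_vge: "vge v x 1 \<Longrightarrow> r x = 0"
  using r_eq_0_iff[of x] vge_mono[of v x 1 0] by (simp add: OK_def)

lemma r_sum: "(\<And>i. i \<in> S \<Longrightarrow> f i \<in> OK v) \<Longrightarrow> r (sum f S) = (\<Sum>i\<in>S. r (f i))"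
proof (induction S rule: infinite_finite_induct)
  case (insert x F)
  have "sum f F \<in> OK v" using insert.prems by (auto simp: OK_def intro!: vge_sum[OF is_dvf_v])
  then show ?case using insert by (simp add: r_add)
qed (simp_all add: r_zero)

lemma r_eq_if_vge_diff: "x \<in> OK v \<Longrightarrow> vge v (y - x) 1 \<Longrightarrow> r y = r x"
  using r_add[of x "y - x"] r_eq_0_if_vge vge_mono[of v "y - x" 1 0]
  by (simp add: OK_def)

lemma G_conj_solution:
  assumes \<tau>: "\<tau> \<in> G" and sol: "\<forall>\<sigma>\<in>G. (\<Sum>j\<in>J. \<sigma> (x j) * y j) = 0" and \<sigma>: "\<sigma> \<in> G"
  shows "(\<Sum>j\<in>J. \<sigma> (x j) * \<tau> (y j)) = 0"
proof -
  have aut: "field_aut \<tau>" using G_field_aut[OF \<tau>] .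
  have "(\<Sum>j\<in>J. \<sigma> (x j) * \<tau> (y j)) = \<tau> (\<Sum>j\<in>J. (inv \<tau> \<circ> \<sigma>) (x j) * y j)"
    by (simp add: field_aut_sum[OF aut] field_aut_mult[OF aut] G_inv_cancel[OF \<tau>])
  also have "\<dots> = 0"
    using bspec[OF sol G_comp[OF G_inv[OF \<tau>] \<sigma>]] field_aut_zero[OF aut] by simp
  finally show ?thesis .
qed

lemma k_linearly_dependent:
  fixes x :: "'j \<Rightarrow> 'K"
  assumes "finite J" and "card G < card J"
  shows "\<exists>c. (\<forall>j\<in>J. c j \<in> k) \<and> (\<exists>j\<in>J. c j \<noteq> 0) \<and> (\<Sum>j\<in>J. c j * x j) = 0"
proof -
  define Sol where "Sol = {y. (\<exists>j\<in>J. y j \<noteq> 0) \<and> (\<forall>\<sigma>\<in>G. (\<Sum>j\<in>J. \<sigma> (x j) * y j) = 0)}"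
  define supp where "supp y = {j \<in> J. y j \<noteq> 0}" for y :: "'j \<Rightarrow> 'K"
  obtain y0 where "y0 \<in> Sol"
    using underdetermined_system_nontrivial_solution[OF subfield_UNIV finite_G assms,
        of "\<lambda>\<sigma> j. \<sigma> (x j)"]
    unfolding Sol_def by auto
  then obtain y where y: "y \<in> Sol" and y_min: "\<And>z. z \<in> Sol \<Longrightarrow> card (supp y) \<le> card (supp z)"
    using ex_has_least_nat[of "\<lambda>y. y \<in> Sol" y0 "\<lambda>y. card (supp y)"] by blast
  obtain j0 where j0: "j0 \<in> J" "y j0 \<noteq> 0" using y unfolding Sol_def by blast
  define y' where "y' j = y j / y j0" for j
  have y'_Sol: "y' \<in> Sol"
    using y j0 unfolding Sol_def y'_def by (auto simp flip: sum_divide_distrib)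
  have supp_y': "supp y' = supp y" using j0 unfolding supp_def y'_def by auto
  \<comment> \<open>a support-minimal solution normalized at j0 is G-invariant, so it has coordinates in k\<close>
  have fixed: "\<tau> (y' j) = y' j" if \<tau>: "\<tau> \<in> G" and j: "j \<in> J" for \<tau> j
  proof (rule ccontr)
    assume ne: "\<tau> (y' j) \<noteq> y' j"
    define z where "z j = y' j - \<tau> (y' j)" for j
    have aut: "field_aut \<tau>" using G_field_aut[OF \<tau>] .
    have "(\<Sum>j\<in>J. \<sigma> (x j) * z j) = 0" if "\<sigma> \<in> G" for \<sigma>
      using G_conj_solution[OF \<tau> _ that, of x y'] y'_Sol that
      unfolding Sol_def z_def by (simp add: algebra_simps sum_subtractf)
    moreover have "z j \<noteq> 0" using ne unfolding z_def by simp
    ultimately have "z \<in> Sol" using j unfolding Sol_def by blast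
    have "supp z \<subseteq> supp y'" using field_aut_zero[OF aut] unfolding supp_def z_def by auto
    moreover have "j0 \<in> supp y' - supp z"
      using j0 field_aut_one[OF aut] unfolding supp_def z_def y'_def by simp
    ultimately have "supp z \<subset> supp y'" by blast
    then have "card (supp z) < card (supp y')"
      using assms(1) by (intro psubset_card_mono) (simp add: supp_def)
    then show False using y_min[OF \<open>z \<in> Sol\<close>] supp_y' by simp
  qed
  have "\<forall>\<sigma>\<in>G. (\<Sum>j\<in>J. \<sigma> (x j) * y' j) = 0" using y'_Sol unfolding Sol_def by blast
  from bspec[OF this id_in_G] have "(\<Sum>j\<in>J. x j * y' j) = 0" by simp
  moreover have "y' j0 \<noteq> 0" using j0 unfolding y'_def by simp
  ultimately show ?thesis
    using fixed in_k_if_fixed j0 by (intro exI[of _ y']) (auto simp: mult.commute)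
qed

lemma vge_pi_basis_summand:
  assumes d: "\<forall>j<card G. d j \<in> k"
    and sum: "vge v (\<Sum>j<card G. d j * \<pi> powi (int j + a)) M"
    and j: "j < card G"
  shows "vge v (d j * \<pi> powi (int j + a)) M"
proof (rule vge_summand_if_distinct_vals[OF is_dvf_v _ _ sum])
  fix i l assume i: "i \<in> {..<card G}" and l: "l \<in> {..<card G}" and "i \<noteq> l"
    and nz: "d i * \<pi> powi (int i + a) \<noteq> 0" "d l * \<pi> powi (int l + a) \<noteq> 0"
  have "d i \<noteq> 0" "d l \<noteq> 0" using nz by auto
  then obtain t s where t: "v (d i) = int (card G) * t" and s: "v (d l) = int (card G) * s"
    using val_k_multiple d i l by (meson lessThan_iff)
  have "v (d i * \<pi> powi (int i + a)) = int (card G) * t + int i + a"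
    using nz(1) t by (simp add: val_mult[OF is_dvf_v] val_power_int_pi)
  moreover have "v (d l * \<pi> powi (int l + a)) = int (card G) * s + int l + a"
    using nz(2) t s by (simp add: val_mult[OF is_dvf_v] val_power_int_pi)
  moreover have "int (card G) * t + int i \<noteq> int (card G) * s + int l"
  proof
    assume "int (card G) * t + int i = int (card G) * s + int l"
    then have "(int (card G) * t + int i) mod int (card G)
        = (int (card G) * s + int l) mod int (card G)"
      by simp
    then show False using i l \<open>i \<noteq> l\<close> by simp
  qed
  ultimately show "v (d i * \<pi> powi (int i + a)) \<noteq> v (d l * \<pi> powi (int l + a))"
    by linarith
qed (use j in auto)

lemma pi_basis_independent:
  assumes "\<forall>j<card G. d j \<in> k" "(\<Sum>j<card G. d j * \<pi> powi (int j + a)) = 0" "j < card G"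
  shows "d j = 0"
proof -
  have "vge v (d j * \<pi> powi (int j + a)) M" for M
    using vge_pi_basis_summand[OF assms(1) _ assms(3), of a M] assms(2) by simp
  then have "d j * \<pi> powi (int j + a) = 0" by (rule zero_if_vge_all[OF is_dvf_v])
  then show ?thesis using pi_nonzero by simp
qed

lemma pi_basis_spans: "\<exists>d. (\<forall>j<card G. d j \<in> k) \<and> x = (\<Sum>j<card G. d j * \<pi> powi (int j + a))"
proof -
  let ?n = "card G"
  define b where "b j = (if j = ?n then x else \<pi> powi (int j + a))" for j
  have "?n < card {..?n}" by simp
  then obtain c where c: "\<forall>j\<in>{..?n}. c j \<in> k" "\<exists>j\<in>{..?n}. c j \<noteq> 0" "(\<Sum>j\<in>{..?n}. c j * b j) = 0"
    using k_linearly_dependent[of "{..?n}" b] by blast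
  have sum_b: "(\<Sum>j\<in>{..?n}. c j * b j) = (\<Sum>j<?n. c j * \<pi> powi (int j + a)) + c ?n * x"
    unfolding b_def lessThan_Suc_atMost[symmetric] by simp
  have ck: "\<forall>j<?n. c j \<in> k" using c(1) by simp
  have "c ?n \<noteq> 0"
  proof
    assume "c ?n = 0"
    then have "c j = 0" if "j \<le> ?n" for j
      using pi_basis_independent[OF ck, of a j] c(3) sum_b that by (cases "j = ?n") auto
    then show False using c(2) by auto
  qed
  define d where "d j = - c j / c ?n" for j
  have "c ?n * x = - (\<Sum>j<?n. c j * \<pi> powi (int j + a))"
    using c(3) sum_b by (simp add: eq_neg_iff_add_eq_0 add.commute)
  then have "x = - (\<Sum>j<?n. c j * \<pi> powi (int j + a)) / c ?n"
    using \<open>c ?n \<noteq> 0\<close> by (simp add: field_simps)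
  also have "\<dots> = (\<Sum>j<?n. d j * \<pi> powi (int j + a))"
    unfolding d_def by (simp add: sum_divide_distrib sum_negf[symmetric])
  moreover have "\<forall>j<?n. d j \<in> k"
    using ck c(1) unfolding d_def
    by (auto intro!: subfield_divide[OF subfield_k] subfield_uminus[OF subfield_k])
  ultimately show ?thesis by blast
qed

lemma val_G_lower_bound:
  assumes \<sigma>: "\<sigma> \<in> G"
  obtains C where "C \<ge> 0" "\<And>x. x \<noteq> 0 \<Longrightarrow> v x - C \<le> v (\<sigma> x)"
proof -
  have aut: "field_aut \<sigma>" using G_field_aut[OF \<sigma>] .
  define L where "L = Min ((\<lambda>j. v (\<sigma> (\<pi> powi int j))) ` {..<card G})"
  have L: "j < card G \<Longrightarrow> vge v (\<sigma> (\<pi> powi int j)) L" for j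
    unfolding L_def by (simp add: vge_def)
  define C where "C = max 0 (int (card G) - 1 - L)"
  have "v x - C \<le> v (\<sigma> x)" if x: "x \<noteq> 0" for x
  proof -
    obtain d where d: "\<forall>j<card G. d j \<in> k" "x = (\<Sum>j<card G. d j * \<pi> powi (int j + 0))"
      using pi_basis_spans[of x 0] by blast
    have d_vge: "vge v (d j) (v x - (int (card G) - 1))" if j: "j < card G" for j
    proof -
      have "vge v (d j * \<pi> powi (int j)) (v x)"
        using vge_pi_basis_summand[OF d(1) _ j, of 0 "v x"] d(2) vge_val[of v x] by simp
      then show ?thesis
        using j pi_nonzero
        by (cases "d j = 0") (auto simp: vge_def val_mult[OF is_dvf_v] val_power_int_pi val_power_pi)
    qed
    have "\<sigma> x = (\<Sum>j<card G. d j * \<sigma> (\<pi> powi int j))"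
      using d by (simp add: field_aut_sum[OF aut] field_aut_mult[OF aut] G_fixes_k[OF \<sigma>])
    moreover have "vge v (\<Sum>j<card G. d j * \<sigma> (\<pi> powi int j)) (v x - (int (card G) - 1) + L)"
      using d_vge L by (intro vge_sum[OF is_dvf_v] vge_mult[OF is_dvf_v]) auto
    ultimately show ?thesis using field_aut_nonzero[OF aut x] unfolding C_def by (simp add: vge_def)
  qed
  moreover have "C \<ge> 0" unfolding C_def by simp
  ultimately show ?thesis using that by blast
qed

lemma val_le_val_G:
  assumes \<sigma>: "\<sigma> \<in> G" and x: "x \<noteq> 0"
  shows "v x \<le> v (\<sigma> x)"
proof (rule ccontr)
  assume less: "\<not> v x \<le> v (\<sigma> x)"
  obtain C where C: "C \<ge> 0" "\<And>x. x \<noteq> 0 \<Longrightarrow> v x - C \<le> v (\<sigma> x)"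
    using val_G_lower_bound[OF \<sigma>] by blast
  \<comment> \<open>a defect v x - v (\<sigma> x) \<ge> 1 would grow linearly along the powers of x\<close>
  define m where "m = nat C + 1"
  have "v (x ^ m) - C \<le> v (\<sigma> (x ^ m))" using C(2)[of "x ^ m"] x by simp
  then have "int m * (v x - v (\<sigma> x)) \<le> C"
    using x field_aut_nonzero[OF G_field_aut[OF \<sigma>] x]
    by (simp add: field_aut_power[OF G_field_aut[OF \<sigma>]] val_power[OF is_dvf_v] algebra_simps)
  moreover have "int m * 1 \<le> int m * (v x - v (\<sigma> x))"
    using less by (intro mult_left_mono) auto
  ultimately have "int m \<le> C" by linarith
  then show False unfolding m_def using C(1) by simp
qed

lemma val_G:
  assumes \<sigma>: "\<sigma> \<in> G" and x: "x \<noteq> 0"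
  shows "v (\<sigma> x) = v x"
  using val_le_val_G[OF \<sigma> x] val_le_val_G[OF G_inv[OF \<sigma>] field_aut_nonzero[OF G_field_aut[OF \<sigma>] x]]
    G_inv_cancel(2)[OF \<sigma>] by simp

lemma residue_rep_in_k:
  assumes x: "x \<in> OK v"
  obtains e where "e \<in> k" "e \<in> OK v" "vge v (x - e) 1"
proof -
  obtain d where d: "\<forall>j<card G. d j \<in> k" "x = (\<Sum>j<card G. d j * \<pi> powi (int j + 0))"
    using pi_basis_spans[of x 0] by blast
  have d_vge: "vge v (d j * \<pi> powi (int j)) 0" if "j < card G" for j
    using vge_pi_basis_summand[OF d(1) _ that, of 0 0] d(2) x by (simp add: OK_def)
  \<comment> \<open>v (d j) is a multiple of n and at least -j > -n, hence nonnegative\<close>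
  have "vge v (d j * \<pi> powi (int j)) 1" if j: "j \<in> {..<card G} - {0}" for j
  proof (cases "d j = 0")
    case False
    obtain t where t: "v (d j) = int (card G) * t" using val_k_multiple d(1) j False by blast
    have nonneg: "0 \<le> int (card G) * t + int j"
      using d_vge[of j] j False t pi_nonzero
      by (auto simp: vge_def val_mult[OF is_dvf_v] val_power_int_pi val_power_pi)
    have "0 \<le> t"
    proof (rule ccontr)
      assume "\<not> 0 \<le> t"
      then have "int (card G) * t \<le> int (card G) * (-1)" by (intro mult_left_mono) auto
      then show False using nonneg j by simp
    qed
    then have "0 \<le> int (card G) * t" by simp
    then show ?thesis
      using j False t pi_nonzero
      by (auto simp: vge_def val_mult[OF is_dvf_v] val_power_int_pi val_power_pi)
  qed simp
  then have "vge v (\<Sum>j\<in>{..<card G} - {0}. d j * \<pi> powi (int j)) 1"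
    by (rule vge_sum[OF is_dvf_v])
  moreover have "x - d 0 = (\<Sum>j\<in>{..<card G} - {0}. d j * \<pi> powi (int j))"
    using d(2) card_G_pos by (simp add: sum.remove)
  ultimately have "vge v (x - d 0) 1" by simp
  moreover have "d 0 \<in> k" "d 0 \<in> OK v"
    using d(1) d_vge[of 0] card_G_pos by (simp_all add: OK_def)
  ultimately show ?thesis using that by blast
qed

lemma pik_power_dvd_iff:
  assumes "c \<in> k"
  shows "(\<exists>y\<in>k \<inter> OK v. c = \<pi>k powi ((a - 1) div int (card G) + 1) * y) \<longleftrightarrow> c = 0 \<or> a \<le> v c"
proof -
  define e where "e = (a - 1) div int (card G) + 1"
  have val_pik_power: "v (\<pi>k powi z) = int (card G) * z" for z
    using val_power_int[OF is_dvf_v pik_nonzero] val_pik by simp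
  have "a \<le> v c \<longleftrightarrow> int (card G) * e \<le> v c" if "c \<noteq> 0"
    using val_k_multiple[OF assms that] ceiling_div_le_iff[of "int (card G)" a] card_G_pos
    unfolding e_def by (auto simp: mult_le_cancel_left_pos)
  moreover have "(\<exists>y\<in>k \<inter> OK v. c = \<pi>k powi e * y) \<longleftrightarrow> c = 0 \<or> int (card G) * e \<le> v c"
  proof
    assume "\<exists>y\<in>k \<inter> OK v. c = \<pi>k powi e * y"
    then obtain y where "y \<in> OK v" "c = \<pi>k powi e * y" by blast
    then show "c = 0 \<or> int (card G) * e \<le> v c"
      using pik_nonzero
      by (cases "y = 0") (auto simp: OK_def vge_def val_mult[OF is_dvf_v] val_pik_power)
  next
    assume c: "c = 0 \<or> int (card G) * e \<le> v c"
    define y where "y = c * \<pi>k powi (- e)"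
    have "\<pi>k powi (- e) \<noteq> 0" using pik_nonzero by simp
    have "y \<in> k" unfolding y_def
      using assms pik_in_k by (intro subfield_mult[OF subfield_k] subfield_power_int[OF subfield_k])
    moreover have "y \<in> OK v"
      using c \<open>\<pi>k powi (- e) \<noteq> 0\<close>
      by (cases "c = 0") (auto simp: y_def OK_def vge_def val_mult[OF is_dvf_v] val_pik_power)
    moreover have "c = \<pi>k powi e * y"
      using pik_nonzero by (simp add: y_def power_int_minus field_simps)
    ultimately show "\<exists>y\<in>k \<inter> OK v. c = \<pi>k powi e * y" by blast
  qed
  ultimately show ?thesis unfolding e_def by auto
qed

section \<open>The filtration C_i and the polynomials p_i\<close>

lemma act_sum: "act G (\<lambda>\<sigma>. \<Sum>b\<in>S. f b \<sigma>) x = (\<Sum>b\<in>S. act G (f b) x)"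
  unfolding act_def by (simp add: sum_distrib_right sum.swap[of _ G S])

lemma act_smult: "act G (\<lambda>\<sigma>. c * f \<sigma>) x = c * act G f x"
  unfolding act_def by (simp add: sum_distrib_left mult.assoc)

lemma act_mult_k: "c \<in> k \<Longrightarrow> act G f (c * y) = c * act G f y"
  unfolding act_def
  by (simp add: sum_distrib_left field_aut_mult[OF G_field_aut] G_fixes_k algebra_simps)

lemma act_add: "act G f (y + z) = act G f y + act G f z"
  unfolding act_def by (simp add: field_aut_add[OF G_field_aut] algebra_simps sum.distrib)

lemma act_zero: "act G f 0 = 0"
  unfolding act_def by (simp add: field_aut_zero[OF G_field_aut])

lemma sum_in_KG: "(\<And>b. b \<in> S \<Longrightarrow> f b \<in> KG G) \<Longrightarrow> (\<lambda>\<sigma>. \<Sum>b\<in>S. f b \<sigma>) \<in> KG G"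
  unfolding KG_def by (auto intro!: sum.neutral)

lemma lincomb_in_KG: "S \<subseteq> KG G \<Longrightarrow> lincomb S c \<in> KG G"
  unfolding lincomb_def by (rule sum_in_KG) (auto simp: KG_def)

lemma zero_in_CC: "(\<lambda>_. 0) \<in> CC v G i"
  unfolding CC_def KG_def act_def by simp

lemma CC_mono: "i \<le> j \<Longrightarrow> f \<in> CC v G j \<Longrightarrow> f \<in> CC v G i"
  unfolding CC_def by (auto intro: vge_mono)

lemma vge_act_CC: "f \<in> CC v G i \<Longrightarrow> x \<noteq> 0 \<Longrightarrow> vge v (act G f x) (v x + i)"
  unfolding CC_def by simp

lemma CC_sum: "(\<And>b. b \<in> S \<Longrightarrow> f b \<in> CC v G i) \<Longrightarrow> (\<lambda>\<sigma>. \<Sum>b\<in>S. f b \<sigma>) \<in> CC v G i"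
  unfolding CC_def by (auto simp: act_sum intro!: sum_in_KG vge_sum[OF is_dvf_v])

lemma CC_smult:
  assumes "f \<in> CC v G i" "c \<noteq> 0"
  shows "(\<lambda>\<sigma>. c * f \<sigma>) \<in> CC v G (i + v c)"
proof -
  have "vge v (c * act G f x) (v x + (i + v c))" if "x \<noteq> 0" for x
    using vge_mult[OF is_dvf_v vge_val[of v c] vge_act_CC[OF assms(1) that]]
    by (simp add: algebra_simps)
  then show ?thesis using assms(1) unfolding CC_def KG_def by (simp add: act_smult)
qed

lemma ex_in_CC: "f \<in> KG G \<Longrightarrow> \<exists>i. f \<in> CC v G i"
proof -
  assume f: "f \<in> KG G"
  define i where "i = Min (insert 0 ((\<lambda>\<sigma>. v (f \<sigma>)) ` {\<sigma>\<in>G. f \<sigma> \<noteq> 0}))"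
  have "vge v (f \<sigma>) i" if "\<sigma> \<in> G" for \<sigma>
    using finite_G that unfolding i_def vge_def by (cases "f \<sigma> = 0") (auto intro!: Min_le)
  then have "vge v (f \<sigma> * \<sigma> x) (v x + i)" if "\<sigma> \<in> G" "x \<noteq> 0" for \<sigma> x
    using vge_mult[OF is_dvf_v _ vge_val[of v "\<sigma> x"], of "f \<sigma>" i] val_G that
    by (simp add: add.commute)
  then have "f \<in> CC v G i"
    using f unfolding CC_def act_def by (auto intro: vge_sum[OF is_dvf_v])
  then show ?thesis ..
qed

lemma ex_CC_jump:
  assumes f: "f \<in> KG G" and j: "f \<notin> CC v G j"
  shows "\<exists>i. f \<in> CC v G i \<and> f \<notin> CC v G (i + 1)"
proof (rule ccontr)
  assume no_jump: "\<not> ?thesis"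
  obtain i0 where i0: "f \<in> CC v G i0" using ex_in_CC[OF f] ..
  have "f \<in> CC v G (i0 + int m)" for m
  proof (induction m)
    case (Suc m)
    then have "f \<in> CC v G (i0 + int m + 1)" using no_jump by blast
    then show ?case by (simp add: ac_simps)
  qed (use i0 in simp)
  then have "f \<in> CC v G (i0 + int (nat (j - i0)))" .
  then show False using j CC_mono[of j "i0 + int (nat (j - i0))" f] by simp
qed

lemma dfun_eqI:
  assumes "f \<in> CC v G (i + depth v k G)" "f \<notin> CC v G (i + depth v k G + 1)"
  shows "dfun v k G f = i"
  unfolding dfun_def
proof (rule the_equality)
  fix j assume "f \<in> CC v G (j + depth v k G) \<and> f \<notin> CC v G (j + depth v k G + 1)"
  then show "j = i"
    using assms CC_mono[of "j + depth v k G + 1" "i + depth v k G" f]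
      CC_mono[of "i + depth v k G + 1" "j + depth v k G" f]
    by (cases "j < i"; cases "i < j") auto
qed (use assms in simp)

definition p_coeff :: "int \<Rightarrow> (('K \<Rightarrow> 'K) \<Rightarrow> 'K) \<Rightarrow> nat \<Rightarrow> 'K" where
  "p_coeff i f j = act G f (\<pi> powi (int j - i)) / \<pi> ^ j"

lemma pp_p_coeff:
  "pp v k G \<pi> r i f = smult (inverse (r (cpi v k G \<pi>))) (\<Sum>j<card G. monom (r (p_coeff i f j)) j)"
  unfolding pp_def p_coeff_def ..

lemma vge_p_coeff:
  assumes "f \<in> CC v G (i + e)"
  shows "vge v (p_coeff i f j) e"
proof -
  have "vge v (act G f (\<pi> powi (int j - i))) (e + v (\<pi> ^ j))"
    using vge_act_CC[OF assms, of "\<pi> powi (int j - i)"] pi_nonzero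
    by (simp add: val_power_int_pi val_power_pi add.commute)
  then show ?thesis unfolding p_coeff_def using pi_nonzero
    by (simp add: vge_divide_iff[OF is_dvf_v])
qed

lemma p_coeff_OK: "f \<in> CC v G i \<Longrightarrow> p_coeff i f j \<in> OK v"
  using vge_p_coeff[of f i 0 j] by (simp add: OK_def)

lemma pp_eq_0_if_CC: "f \<in> CC v G (i + 1) \<Longrightarrow> pp v k G \<pi> r i f = 0"
  using vge_p_coeff r_eq_0_if_vge unfolding pp_p_coeff by simp

lemma pp_sum:
  assumes "\<And>b. b \<in> S \<Longrightarrow> f b \<in> CC v G i"
  shows "pp v k G \<pi> r i (\<lambda>\<sigma>. \<Sum>b\<in>S. f b \<sigma>) = (\<Sum>b\<in>S. pp v k G \<pi> r i (f b))"
proof -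
  have "r (p_coeff i (\<lambda>\<sigma>. \<Sum>b\<in>S. f b \<sigma>) j) = (\<Sum>b\<in>S. r (p_coeff i (f b) j))" for j
    unfolding p_coeff_def act_sum sum_divide_distrib
    using assms p_coeff_OK[unfolded p_coeff_def] by (intro r_sum) blast
  then show ?thesis
    unfolding pp_p_coeff by (simp add: monom_sum smult_sum_right sum.swap[of _ S])
qed

lemma r_p_coeff_smult_k:
  assumes c: "c \<in> k" "c \<noteq> 0"
    and e: "e \<in> k" "e \<in> OK v" "vge v (c * \<pi> powi (- v c) - e) 1"
    and f: "f \<in> CC v G i"
  shows "r (p_coeff (i + v c) (\<lambda>\<sigma>. c * f \<sigma>) j) = r e * r (p_coeff i f j)"
proof -
  define u where "u = c * \<pi> powi (- v c)"
  define y where "y = \<pi> powi (int j - i)"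
  have "c * \<pi> powi (int j - (i + v c)) = u * y"
    unfolding u_def y_def using pi_nonzero by (simp add: power_int_add[symmetric] algebra_simps)
  then have "p_coeff (i + v c) (\<lambda>\<sigma>. c * f \<sigma>) j = act G f (u * y) / \<pi> ^ j"
    unfolding p_coeff_def act_smult act_mult_k[OF c(1), symmetric] by simp
  also have "act G f (u * y) = e * act G f y + act G f ((u - e) * y)"
    using act_add[of f "e * y" "(u - e) * y"] act_mult_k[OF e(1)] by (simp add: algebra_simps)
  finally have eq: "p_coeff (i + v c) (\<lambda>\<sigma>. c * f \<sigma>) j
      = e * p_coeff i f j + act G f ((u - e) * y) / \<pi> ^ j"
    unfolding p_coeff_def y_def by (simp add: add_divide_distrib)
  have "vge v (act G f ((u - e) * y) / \<pi> ^ j) 1"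
  proof (cases "u = e")
    case False
    have "vge v ((u - e) * y) (1 + (int j - i))"
      using vge_mult[OF is_dvf_v e(3)[folded u_def] vge_val[of v y]]
      unfolding y_def by (simp add: val_power_int_pi)
    then have "vge v (act G f ((u - e) * y)) (1 + int j)"
      using vge_act_CC[OF f, of "(u - e) * y"] False pi_nonzero unfolding y_def
      by (auto simp: vge_def)
    then show ?thesis using pi_nonzero by (simp add: vge_divide_iff[OF is_dvf_v] val_power_pi)
  qed (simp add: act_zero)
  moreover have "e * p_coeff i f j \<in> OK v"
    using vge_mult[OF is_dvf_v, of e 0 "p_coeff i f j" 0] e(2) p_coeff_OK[OF f]
    by (simp add: OK_def)
  ultimately show ?thesis
    using eq r_eq_if_vge_diff r_mult[OF e(2) p_coeff_OK[OF f]] by simp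
qed

lemma pp_smult_k:
  assumes c: "c \<in> k" "c \<noteq> 0"
  obtains l where "l \<noteq> 0"
    "\<And>i f. f \<in> CC v G i \<Longrightarrow>
       pp v k G \<pi> r (i + v c) (\<lambda>\<sigma>. c * f \<sigma>) = smult l (pp v k G \<pi> r i f)"
proof -
  define u where "u = c * \<pi> powi (- v c)"
  have u: "u \<noteq> 0" "v u = 0"
    using c pi_nonzero by (simp_all add: u_def val_mult[OF is_dvf_v] val_power_int_pi)
  then obtain e where e: "e \<in> k" "e \<in> OK v" "vge v (u - e) 1"
    using residue_rep_in_k[of u] by (auto simp: OK_def vge_def)
  have "r e \<noteq> 0"
  proof
    assume "r e = 0"
    then have "vge v e 1" using e r_eq_0_iff by simp
    then have "vge v (e + (u - e)) 1" using e(3) by (rule vge_add[OF is_dvf_v])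
    then show False using u by (simp add: vge_def)
  qed
  moreover have "pp v k G \<pi> r (i + v c) (\<lambda>\<sigma>. c * f \<sigma>) = smult (r e) (pp v k G \<pi> r i f)"
    if "f \<in> CC v G i" for i f
    using r_p_coeff_smult_k[OF c e[unfolded u_def] that] unfolding pp_p_coeff
    by (simp add: smult_monom[symmetric] smult_sum_right mult.commute)
  ultimately show ?thesis using that by blast
qed

lemma kG_linearly_dependent:
  assumes "finite S" "card G < card S" "S \<subseteq> kG k G"
  shows "\<exists>c. (\<forall>b\<in>S. c b \<in> k) \<and> (\<exists>b\<in>S. c b \<noteq> 0) \<and> lincomb S c = (\<lambda>_. 0)"
proof -
  obtain c where c: "\<forall>b\<in>S. c b \<in> k" "\<exists>b\<in>S. c b \<noteq> 0" "\<forall>\<sigma>\<in>G. (\<Sum>b\<in>S. b \<sigma> * c b) = 0"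
    using underdetermined_system_nontrivial_solution[OF subfield_k finite_G assms(1,2),
        of "\<lambda>\<sigma> b. b \<sigma>"] assms(3)
    unfolding kG_def by blast
  have "lincomb S c \<sigma> = 0" for \<sigma>
    using c(3) assms(3) unfolding lincomb_def kG_def KG_def
    by (cases "\<sigma> \<in> G") (auto simp: mult.commute intro!: sum.neutral)
  then show ?thesis using c(1,2) by blast
qed

lemma kspan_subset_kG:
  assumes "B \<subseteq> kG k G"
  shows "kspan k B \<subseteq> kG k G"
proof
  fix f assume "f \<in> kspan k B"
  then obtain S c where f: "f = lincomb S c" "S \<subseteq> B" "\<forall>b\<in>S. c b \<in> k"
    unfolding kspan_def by blast
  have "f \<in> KG G" unfolding f(1) using f(2) assms by (intro lincomb_in_KG) (auto simp: kG_def)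
  moreover have "f \<sigma> \<in> k" for \<sigma>
    using f assms unfolding lincomb_def kG_def
    by (auto intro!: subfield_sum[OF subfield_k] subfield_mult[OF subfield_k])
  ultimately show "f \<in> kG k G" unfolding kG_def by blast
qed

end

section \<open>Graded-independent families\<close>

locale graded_indep_family = totally_ramified v k G \<pi> \<pi>k r
  for v :: "'K::field \<Rightarrow> int" and k G \<pi> \<pi>k and r :: "'K \<Rightarrow> 'r::field" +
  fixes B :: "(('K \<Rightarrow> 'K) \<Rightarrow> 'K) set"
  assumes finite_B: "finite B"
    and B_subset: "B \<subseteq> KG G - {\<lambda>_. 0}"
    and graded_indep_B: "graded_indep v k G \<pi> r B"
begin

lemma graded_indepD:
  assumes "finite S" "S \<subseteq> Bs v k G B s"
    "R_eq (card G) (\<Sum>b\<in>S. smult (lam b) (frakp v k G \<pi> r b)) 0" "b \<in> S"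
  shows "lam b = 0"
  using graded_indep_B assms unfolding graded_indep_def by blast

lemma frakp_nonzero:
  assumes "b \<in> B"
  shows "frakp v k G \<pi> r b \<noteq> 0"
proof
  assume "frakp v k G \<pi> r b = 0"
  then have "(1::'r) = 0"
    using graded_indepD[of "{b}" "dfun v k G b" "\<lambda>_. 1" b] assms
    by (simp add: Bs_def R_eq_def)
  then show False by simp
qed

lemma CC_dfun:
  assumes b: "b \<in> B"
  shows "b \<in> CC v G (dfun v k G b + depth v k G)" "b \<notin> CC v G (dfun v k G b + depth v k G + 1)"
proof -
  have "\<exists>j. b \<notin> CC v G j"
    using frakp_nonzero[OF b] pp_eq_0_if_CC unfolding frakp_def by blast
  then obtain i where i: "b \<in> CC v G i" "b \<notin> CC v G (i + 1)"
    using ex_CC_jump b B_subset by blast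
  then have "dfun v k G b = i - depth v k G" by (intro dfun_eqI) simp_all
  then show "b \<in> CC v G (dfun v k G b + depth v k G)" "b \<notin> CC v G (dfun v k G b + depth v k G + 1)"
    using i by simp_all
qed

definition lead_depth :: "((('K \<Rightarrow> 'K) \<Rightarrow> 'K) \<Rightarrow> 'K) \<Rightarrow> int" where
  "lead_depth c = Min {v (c b) + dfun v k G b | b. b \<in> B \<and> c b \<noteq> 0}"

definition lead_terms :: "((('K \<Rightarrow> 'K) \<Rightarrow> 'K) \<Rightarrow> 'K) \<Rightarrow> (('K \<Rightarrow> 'K) \<Rightarrow> 'K) set" where
  "lead_terms c = {b \<in> B. c b \<noteq> 0 \<and> v (c b) + dfun v k G b = lead_depth c}"

lemma lead_depth_le: "b \<in> B \<Longrightarrow> c b \<noteq> 0 \<Longrightarrow> lead_depth c \<le> v (c b) + dfun v k G b"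
  unfolding lead_depth_def using finite_B by (intro Min_le) auto

lemma lead_terms_nonempty:
  assumes "\<exists>b\<in>B. c b \<noteq> 0"
  shows "lead_terms c \<noteq> {}"
proof -
  have "lead_depth c \<in> {v (c b) + dfun v k G b | b. b \<in> B \<and> c b \<noteq> 0}"
    unfolding lead_depth_def using finite_B assms by (intro Min_in) auto
  then show ?thesis unfolding lead_terms_def by auto
qed

lemma lead_terms_graded:
  assumes "\<forall>b\<in>B. c b \<in> k"
  shows "lead_terms c \<subseteq> Bs v k G B (lead_depth c)"
proof
  fix b assume b: "b \<in> lead_terms c"
  then obtain t where "v (c b) = int (card G) * t"
    using val_k_multiple assms unfolding lead_terms_def by blast
  with b have "lead_depth c = dfun v k G b + int (card G) * t"
    unfolding lead_terms_def by simp
  with b show "b \<in> Bs v k G B (lead_depth c)"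
    unfolding lead_terms_def Bs_def by simp
qed

lemma term_in_CC:
  assumes "b \<in> B" "c b \<noteq> 0"
  shows "(\<lambda>\<sigma>. c b * b \<sigma>) \<in> CC v G (v (c b) + dfun v k G b + depth v k G)"
  using CC_smult[OF CC_dfun(1)[OF assms(1)] assms(2)] by (simp add: ac_simps)

lemma term_in_CC_lead:
  assumes "b \<in> B"
  shows "(\<lambda>\<sigma>. c b * b \<sigma>) \<in> CC v G (lead_depth c + depth v k G)"
proof (cases "c b = 0")
  case False
  then show ?thesis
    using lead_depth_le[of b c] assms
    by (intro CC_mono[OF _ term_in_CC[of b c, OF assms False]]) simp
qed (simp add: zero_in_CC)

lemma nonlead_term_in_CC:
  assumes "b \<in> B" "b \<notin> lead_terms c"
  shows "(\<lambda>\<sigma>. c b * b \<sigma>) \<in> CC v G (lead_depth c + depth v k G + 1)"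
proof (cases "c b = 0")
  case False
  then have "lead_depth c < v (c b) + dfun v k G b"
    using lead_depth_le[of b c] assms unfolding lead_terms_def by fastforce
  then show ?thesis
    by (intro CC_mono[OF _ term_in_CC[of b c, OF assms(1) False]]) simp
qed (simp add: zero_in_CC)

lemma lincomb_in_CC_lead: "lincomb B c \<in> CC v G (lead_depth c + depth v k G)"
  unfolding lincomb_def by (intro CC_sum term_in_CC_lead)

lemma pp_lincomb_lead:
  assumes "\<forall>b\<in>B. c b \<in> k"
  obtains lam where "\<forall>b\<in>lead_terms c. lam b \<noteq> 0"
    "pp v k G \<pi> r (lead_depth c + depth v k G) (lincomb B c)
       = (\<Sum>b\<in>lead_terms c. smult (lam b) (frakp v k G \<pi> r b))"
proof -
  let ?D = "depth v k G" and ?L = "lead_depth c"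
  have "\<forall>b\<in>lead_terms c. \<exists>l. l \<noteq> 0 \<and> (\<forall>i f. f \<in> CC v G i \<longrightarrow>
      pp v k G \<pi> r (i + v (c b)) (\<lambda>\<sigma>. c b * f \<sigma>) = smult l (pp v k G \<pi> r i f))"
  proof
    fix b assume "b \<in> lead_terms c"
    then have "c b \<in> k" "c b \<noteq> 0" using assms unfolding lead_terms_def by auto
    then show "\<exists>l. l \<noteq> 0 \<and> (\<forall>i f. f \<in> CC v G i \<longrightarrow>
      pp v k G \<pi> r (i + v (c b)) (\<lambda>\<sigma>. c b * f \<sigma>) = smult l (pp v k G \<pi> r i f))"
      by (rule pp_smult_k) blast
  qed
  from bchoice[OF this] obtain lam where lam: "\<forall>b\<in>lead_terms c. lam b \<noteq> 0 \<and> (\<forall>i f. f \<in> CC v G i \<longrightarrow>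
      pp v k G \<pi> r (i + v (c b)) (\<lambda>\<sigma>. c b * f \<sigma>) = smult (lam b) (pp v k G \<pi> r i f))"
    by blast
  have lead_B: "lead_terms c \<subseteq> B" unfolding lead_terms_def by auto
  have "pp v k G \<pi> r (?L + ?D) (lincomb B c) = (\<Sum>b\<in>B. pp v k G \<pi> r (?L + ?D) (\<lambda>\<sigma>. c b * b \<sigma>))"
    unfolding lincomb_def by (intro pp_sum term_in_CC_lead)
  also have "\<dots> = (\<Sum>b\<in>lead_terms c. pp v k G \<pi> r (?L + ?D) (\<lambda>\<sigma>. c b * b \<sigma>))"
    using finite_B lead_B nonlead_term_in_CC pp_eq_0_if_CC by (intro sum.mono_neutral_right) auto
  also have "\<dots> = (\<Sum>b\<in>lead_terms c. smult (lam b) (frakp v k G \<pi> r b))"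
  proof (rule sum.cong)
    fix b assume b: "b \<in> lead_terms c"
    then have index: "?L + ?D = (dfun v k G b + ?D) + v (c b)" unfolding lead_terms_def by simp
    have "b \<in> CC v G (dfun v k G b + ?D)" using CC_dfun(1) b lead_B by blast
    then have "pp v k G \<pi> r ((dfun v k G b + ?D) + v (c b)) (\<lambda>\<sigma>. c b * b \<sigma>)
        = smult (lam b) (pp v k G \<pi> r (dfun v k G b + ?D) b)"
      using lam b by blast
    then show "pp v k G \<pi> r (?L + ?D) (\<lambda>\<sigma>. c b * b \<sigma>) = smult (lam b) (frakp v k G \<pi> r b)"
      unfolding frakp_def index .
  qed simp
  finally show ?thesis using that lam by blast
qed

lemma lincomb_notin_CC_lead:
  assumes "\<forall>b\<in>B. c b \<in> k" "\<exists>b\<in>B. c b \<noteq> 0"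
  shows "lincomb B c \<notin> CC v G (lead_depth c + depth v k G + 1)"
proof
  assume "lincomb B c \<in> CC v G (lead_depth c + depth v k G + 1)"
  then have pp0: "pp v k G \<pi> r (lead_depth c + depth v k G) (lincomb B c) = 0"
    by (rule pp_eq_0_if_CC)
  obtain lam where lam: "\<forall>b\<in>lead_terms c. lam b \<noteq> 0"
    "pp v k G \<pi> r (lead_depth c + depth v k G) (lincomb B c)
       = (\<Sum>b\<in>lead_terms c. smult (lam b) (frakp v k G \<pi> r b))"
    using pp_lincomb_lead[OF assms(1)] by blast
  obtain b where b: "b \<in> lead_terms c" using lead_terms_nonempty[OF assms(2)] by blast
  have "finite (lead_terms c)" using finite_B unfolding lead_terms_def by simp
  then have "lam b = 0"
    using graded_indepD[OF _ lead_terms_graded[OF assms(1)] _ b] lam(2) pp0 by (simp add: R_eq_def)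
  then show False using lam(1) b by blast
qed

lemma dfun_lincomb:
  assumes "\<forall>b\<in>B. c b \<in> k" "\<exists>b\<in>B. c b \<noteq> 0"
  shows "dfun v k G (lincomb B c) = lead_depth c"
  using lincomb_in_CC_lead lincomb_notin_CC_lead[OF assms] by (intro dfun_eqI) simp_all

lemma lincomb_nonzero:
  assumes "\<forall>b\<in>B. c b \<in> k" "\<exists>b\<in>B. c b \<noteq> 0"
  shows "lincomb B c \<noteq> (\<lambda>_. 0)"
  using lincomb_notin_CC_lead[OF assms] zero_in_CC by auto

lemma frakp_lincomb:
  assumes "\<forall>b\<in>B. c b \<in> k" "\<exists>b\<in>B. c b \<noteq> 0"
  obtains lam where "\<forall>b\<in>lead_terms c. lam b \<noteq> 0"
    "frakp v k G \<pi> r (lincomb B c) = (\<Sum>b\<in>lead_terms c. smult (lam b) (frakp v k G \<pi> r b))"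
  using pp_lincomb_lead[OF assms(1)] unfolding frakp_def dfun_lincomb[OF assms] by blast

lemma val_coeff_if_lincomb_in_CC:
  assumes c: "\<forall>b\<in>B. c b \<in> k" and F: "lincomb B c \<in> CC v G i" and b: "b \<in> B" "c b \<noteq> 0"
  shows "i - depth v k G - dfun v k G b \<le> v (c b)"
proof -
  have "i \<le> lead_depth c + depth v k G"
  proof (rule ccontr)
    assume "\<not> i \<le> lead_depth c + depth v k G"
    then have "lead_depth c + depth v k G + 1 \<le> i" by simp
    then have "lincomb B c \<in> CC v G (lead_depth c + depth v k G + 1)" using F by (rule CC_mono)
    then show False using lincomb_notin_CC_lead c b by blast
  qed
  then show ?thesis using lead_depth_le[of b c] b by simp
qed

lemma lincomb_in_CC_if_val_coeff:
  assumes "\<forall>b\<in>B. c b \<noteq> 0 \<longrightarrow> i - depth v k G - dfun v k G b \<le> v (c b)"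
  shows "lincomb B c \<in> CC v G i"
  unfolding lincomb_def
proof (rule CC_sum)
  fix b assume b: "b \<in> B"
  show "(\<lambda>\<sigma>. c b * b \<sigma>) \<in> CC v G i"
  proof (cases "c b = 0")
    case False
    then have "i \<le> v (c b) + dfun v k G b + depth v k G" using assms b by auto
    then show ?thesis using term_in_CC[of b c, OF b False] by (rule CC_mono)
  qed (simp add: zero_in_CC)
qed

lemma CC_inter_span:
  "CC v G i \<inter> {lincomb B c | c. \<forall>b\<in>B. c b \<in> k} =
   {lincomb B c | c. \<forall>b\<in>B. \<exists>y\<in>k \<inter> OK v.
      c b = \<pi>k powi ((i - depth v k G - dfun v k G b - 1) div int (card G) + 1) * y}"
  (is "?L = ?R")
proof
  show "?L \<subseteq> ?R"
  proof
    fix F assume "F \<in> ?L"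
    then obtain c where F: "F = lincomb B c" "F \<in> CC v G i" and c: "\<forall>b\<in>B. c b \<in> k" by blast
    have "\<exists>y\<in>k \<inter> OK v.
        c b = \<pi>k powi ((i - depth v k G - dfun v k G b - 1) div int (card G) + 1) * y"
      if "b \<in> B" for b
      using pik_power_dvd_iff[of "c b" "i - depth v k G - dfun v k G b"]
        val_coeff_if_lincomb_in_CC[OF c _ that] F c that by blast
    then show "F \<in> ?R" using F(1) by blast
  qed
  show "?R \<subseteq> ?L"
  proof
    fix F assume "F \<in> ?R"
    then obtain c where F: "F = lincomb B c"
      and c: "\<forall>b\<in>B. \<exists>y\<in>k \<inter> OK v.
        c b = \<pi>k powi ((i - depth v k G - dfun v k G b - 1) div int (card G) + 1) * y"
      by blast
    have ck: "\<forall>b\<in>B. c b \<in> k"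
      using c pik_in_k
      by (fastforce intro: subfield_mult[OF subfield_k] subfield_power_int[OF subfield_k])
    then have "\<forall>b\<in>B. c b \<noteq> 0 \<longrightarrow> i - depth v k G - dfun v k G b \<le> v (c b)"
      using c pik_power_dvd_iff by blast
    then show "F \<in> ?L" using F ck lincomb_in_CC_if_val_coeff by blast
  qed
qed

lemma graded_base_if_card:
  assumes card: "card B = card G" and B_kG: "B \<subseteq> kG k G"
  shows "graded_base v k G \<pi> r B"
proof -
  have "g \<in> kspan k B" if g: "g \<in> kG k G" for g
  proof (cases "g \<in> B")
    case True
    then have "g = lincomb {g} (\<lambda>_. 1)" unfolding lincomb_def by simp
    then show ?thesis using True subfield_one[OF subfield_k] unfolding kspan_def by blast
  next
    case False
    have "finite (insert g B)" "card G < card (insert g B)" "insert g B \<subseteq> kG k G"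
      using finite_B card False g B_kG by simp_all
    from kG_linearly_dependent[OF this] obtain c where c: "\<forall>b\<in>insert g B. c b \<in> k"
      "\<exists>b\<in>insert g B. c b \<noteq> 0" "lincomb (insert g B) c = (\<lambda>_. 0)"
      by blast
    have split: "lincomb (insert g B) c \<sigma> = c g * g \<sigma> + lincomb B c \<sigma>" for \<sigma>
      using finite_B False unfolding lincomb_def by simp
    have "c g \<noteq> 0"
    proof
      assume "c g = 0"
      then have "lincomb B c = (\<lambda>_. 0)" using c(3) split by (simp add: fun_eq_iff)
      then show False using lincomb_nonzero c \<open>c g = 0\<close> by auto
    qed
    define c' where "c' b = - c b / c g" for b
    have "g = lincomb B c'"
    proof
      fix \<sigma>
      have "c g * g \<sigma> = - lincomb B c \<sigma>"
        using c(3) split[of \<sigma>] by (simp add: eq_neg_iff_add_eq_0)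
      then have "g \<sigma> = - lincomb B c \<sigma> / c g" using \<open>c g \<noteq> 0\<close> by (simp add: field_simps)
      also have "\<dots> = lincomb B c' \<sigma>"
        unfolding lincomb_def c'_def by (simp add: sum_divide_distrib sum_negf[symmetric])
      finally show "g \<sigma> = lincomb B c' \<sigma>" .
    qed
    moreover have "\<forall>b\<in>B. c' b \<in> k" using c(1) unfolding c'_def
      by (auto intro!: subfield_divide[OF subfield_k] subfield_uminus[OF subfield_k])
    ultimately show ?thesis unfolding kspan_def using finite_B by blast
  qed
  then show ?thesis
    unfolding graded_base_def using B_kG graded_indep_B kspan_subset_kG by blast
qed

end

theorem proposition3p1p2:
  fixes v :: "'K::field \<Rightarrow> int" and k :: "'K set" and G :: "('K \<Rightarrow> 'K) set"
    and \<pi> \<pi>k :: 'K and r :: "'K \<Rightarrow> 'r::field"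
    and B :: "(('K \<Rightarrow> 'K) \<Rightarrow> 'K) set"
  assumes hyp: "tr_context v k G \<pi> \<pi>k r"
    and finB: "finite B"
    and Bsub: "B \<subseteq> KG G - {\<lambda>_. 0}"
    and indep: "graded_indep v k G \<pi> r B"
  shows
   "(\<forall>c. (\<forall>b\<in>B. c b \<in> k) \<and> (\<exists>b\<in>B. c b \<noteq> 0) \<longrightarrow>
       (let m = Min {v (c b) + dfun v k G b | b. b \<in> B \<and> c b \<noteq> 0};
            B' = {b \<in> B. c b \<noteq> 0 \<and> v (c b) + dfun v k G b = m}
        in lincomb B c \<noteq> (\<lambda>_. 0) \<and> dfun v k G (lincomb B c) = m \<and>
           (\<exists>lam::(('K \<Rightarrow> 'K) \<Rightarrow> 'K) \<Rightarrow> 'r. (\<forall>b\<in>B'. lam b \<noteq> 0) \<and>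
              R_eq (card G) (frakp v k G \<pi> r (lincomb B c))
                 (\<Sum>b\<in>B'. smult (lam b) (frakp v k G \<pi> r b)))))
    \<and> (\<forall>i::int. CC v G i \<inter> {lincomb B c | c. \<forall>b\<in>B. c b \<in> k} =
         {lincomb B c | c. \<forall>b\<in>B. \<exists>y\<in>k \<inter> OK v.
            c b = \<pi>k powi ((i - depth v k G - dfun v k G b - 1) div int (card G) + 1) * y})
    \<and> (card B = card G \<and> B \<subseteq> kG k G \<longrightarrow> graded_base v k G \<pi> r B)"
proof -
  interpret graded_indep_family v k G \<pi> \<pi>k r B
    using assms by unfold_locales (simp_all add: totally_ramified_def)
  have part1: "lincomb B c \<noteq> (\<lambda>_. 0) \<and> dfun v k G (lincomb B c) = lead_depth c \<and>
      (\<exists>lam. (\<forall>b\<in>lead_terms c. lam b \<noteq> 0) \<and>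
         R_eq (card G) (frakp v k G \<pi> r (lincomb B c))
           (\<Sum>b\<in>lead_terms c. smult (lam b) (frakp v k G \<pi> r b)))"
    if c: "\<forall>b\<in>B. c b \<in> k" "\<exists>b\<in>B. c b \<noteq> 0" for c
  proof -
    obtain lam where "\<forall>b\<in>lead_terms c. lam b \<noteq> 0"
      "frakp v k G \<pi> r (lincomb B c) = (\<Sum>b\<in>lead_terms c. smult (lam b) (frakp v k G \<pi> r b))"
      using frakp_lincomb[OF c] .
    then show ?thesis using lincomb_nonzero[OF c] dfun_lincomb[OF c] by (auto simp: R_eq_def)
  qed
  show ?thesis
    unfolding Let_def lead_depth_def[symmetric] lead_terms_def[symmetric]
    using part1 CC_inter_span graded_base_if_card by blast
qed

end
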